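(* Let $n\ge1$, $0\le t_0<t$, and let $g:\mathbb{R}^{2n}\to\mathbb{R}$ be locally integrable. Then $$\sum_{\underline{\pi}}\ \int_{t_0\le t_1\le\cdots\le t_{2n}\le t}dt_1\cdots dt_{2n}\ g(t_{\iota_1},t_{\sigma_1};\dots;t_{\iota_n},t_{\sigma_n})=\int_{t_0\le u_1\le\cdots\le u_n\le t}du_1\cdots du_n\int_{u_m\le u'_m\le t,\ m=1,\dots,n}du'_1\cdots du'_n\ g(u_1,u'_1;\dots;u_n,u'_n),$$ where the sum runs over all pairings $\underline{\pi}=\{(\iota_1,\sigma_1),\dots,(\iota_n,\sigma_n)\}$ of $(1,\dots,2n)$.
   Context: A pairing of $(1,\dots,2n)$ is a set $\{(\iota_1,\sigma_1),\dots,(\iota_n,\sigma_n)\}$ of $n$ pairs of indices such that $1=\iota_1<\iota_2<\cdots<\iota_n$, $\iota_m<\sigma_m$ for each $m$, and $\{\iota_1,\dots,\iota_n\}\cup\{\sigma_1,\dots,\sigma_n\}=\{1,\dots,2n\}$. *)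

theory Defs
  imports "HOL-Analysis.Analysis" "HOL-Probability.Probability"
begin

definition pairing :: "nat \<Rightarrow> (nat \<times> nat) set \<Rightarrow> bool" where
  "pairing n P \<longleftrightarrow> P \<subseteq> {1..2*n} \<times> {1..2*n} \<and> card P = n \<and>
     (\<forall>(i, s) \<in> P. i < s) \<and> fst ` P \<union> snd ` P = {1..2*n}"

definition pairing_iota :: "(nat \<times> nat) set \<Rightarrow> nat \<Rightarrow> nat" where
  "pairing_iota P m = sorted_list_of_set (fst ` P) ! (m - 1)"

definition pairing_sigma :: "(nat \<times> nat) set \<Rightarrow> nat \<Rightarrow> nat" where
  "pairing_sigma P m = (THE s. (pairing_iota P m, s) \<in> P)"

text \<open>Argument of g: coordinates 0..2n-1 of a point of R^{2n} hold
  (t_iota_1, t_sigma_1, ..., t_iota_n, t_sigma_n).\<close>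
definition pairing_arg :: "nat \<Rightarrow> (nat \<times> nat) set \<Rightarrow> (nat \<Rightarrow> real) \<Rightarrow> (nat \<Rightarrow> real)" where
  "pairing_arg n P tt = (\<lambda>k. if k < 2*n then
      (if even k then tt (pairing_iota P (k div 2 + 1)) else tt (pairing_sigma P (k div 2 + 1)))
      else undefined)"

definition interleave_arg :: "nat \<Rightarrow> (nat \<Rightarrow> real) \<Rightarrow> (nat \<Rightarrow> real) \<Rightarrow> (nat \<Rightarrow> real)" where
  "interleave_arg n u u' = (\<lambda>k. if k < 2*n then
      (if even k then u (k div 2 + 1) else u' (k div 2 + 1)) else undefined)"

abbreviation lebR :: "nat set \<Rightarrow> (nat \<Rightarrow> real) measure" where
  "lebR I \<equiv> PiM I (\<lambda>_. lborel)"

definition locally_integrable_2n :: "nat \<Rightarrow> ((nat \<Rightarrow> real) \<Rightarrow> real) \<Rightarrow> bool" where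
  "locally_integrable_2n n g \<longleftrightarrow>
     (\<forall>R::real. set_integrable (lebR {..<2*n}) {x. \<forall>i<2*n. \<bar>x i\<bar> \<le> R} g)"

end

theory Submission
  imports Defs
begin

text \<open>
  A pairing P assigns to the argument slots 0, ..., 2n-1 of g the time indices
  \<iota>(1), \<sigma>(1), ..., \<iota>(n), \<sigma>(n); this is a bijection onto {1..2n}, so the substitution
  y = pairing_arg n P tt preserves Lebesgue measure and turns the P-th summand into the integral
  of g over those y which become ordered when read in the order of P. Almost every y has distinct coordinates, and then the
  only bijection that orders y is its rank function. This bijection comes from a pairing exactly
  when y(0) < y(2) < ... < y(2n-2) and y(2m-2) < y(2m-1) for all m, and otherwise no pairing
  orders y. Hence the sum is the integral of g over this interleaved region, which is the
  right-hand side by Fubini after splitting y into its even and odd coordinates (u, u').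
\<close>

section \<open>Pairings as assignments of time indices to slots\<close>

(* Slots are the coordinates k < 2*n of a point of R^{2n}; slots 2*m-2 and 2*m-1 carry the m-th pair,
   as in pairing_arg and interleave_arg. *)
lemma even_slot: "(m::nat) \<in> {1..n} \<Longrightarrow> 2*m-2 < 2*n \<and> even (2*m-2) \<and> (2*m-2) div 2 + 1 = m"
  by (cases m) auto

lemma odd_slot: "(m::nat) \<in> {1..n} \<Longrightarrow> 2*m-1 < 2*n \<and> odd (2*m-1) \<and> (2*m-1) div 2 + 1 = m"
  by (cases m) auto

lemma slot_cases:
  assumes "(k::nat) < 2*n"
  obtains m where "m \<in> {1..n}" "k = 2*m-2" | m where "m \<in> {1..n}" "k = 2*m-1"
proof (cases "even k")
  case True
  then obtain m where "k = 2*m" by (elim evenE)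
  then show ?thesis using assms that(1)[of "m+1"] by auto
next
  case False
  then obtain m where "k = 2*m+1" by (elim oddE)
  then show ?thesis using assms that(2)[of "m+1"] by auto
qed

definition ordered_between :: "nat \<Rightarrow> real \<Rightarrow> real \<Rightarrow> (nat \<Rightarrow> real) \<Rightarrow> bool" where
  "ordered_between N a b x \<longleftrightarrow> a \<le> x 1 \<and> (\<forall>i\<in>{1..<N}. x i \<le> x (i+1)) \<and> x N \<le> b"

lemma ordered_between_iff:
  assumes "N \<ge> 1"
  shows "ordered_between N a b x \<longleftrightarrow>
    (\<forall>i\<in>{1..N}. \<forall>j\<in>{1..N}. i \<le> j \<longrightarrow> x i \<le> x j) \<and> (\<forall>i\<in>{1..N}. a \<le> x i \<and> x i \<le> b)"
proof
  assume ord: "ordered_between N a b x"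
  have mono: "x i \<le> x j" if "i \<in> {1..N}" "j \<in> {1..N}" "i \<le> j" for i j
    using that(3,2)
  proof (induction j rule: dec_induct)
    case (step j)
    then have "x j \<le> x (Suc j)" using ord that(1) by (auto simp: ordered_between_def)
    moreover have "x i \<le> x j" using step that(1) by auto
    ultimately show ?case by simp
  qed simp
  moreover have "a \<le> x i \<and> x i \<le> b" if "i \<in> {1..N}" for i
    using mono[of 1 i] mono[of i N] that assms ord by (force simp: ordered_between_def)
  ultimately show "(\<forall>i\<in>{1..N}. \<forall>j\<in>{1..N}. i \<le> j \<longrightarrow> x i \<le> x j) \<and> (\<forall>i\<in>{1..N}. a \<le> x i \<and> x i \<le> b)"
    by blast
next
  assume "(\<forall>i\<in>{1..N}. \<forall>j\<in>{1..N}. i \<le> j \<longrightarrow> x i \<le> x j) \<and> (\<forall>i\<in>{1..N}. a \<le> x i \<and> x i \<le> b)"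
  then have mono: "\<And>i j. i \<in> {1..N} \<Longrightarrow> j \<in> {1..N} \<Longrightarrow> i \<le> j \<Longrightarrow> x i \<le> x j"
    and bounds: "\<And>i. i \<in> {1..N} \<Longrightarrow> a \<le> x i \<and> x i \<le> b" by blast+
  have "x i \<le> x (i+1)" if "i \<in> {1..<N}" for i using that by (intro mono) auto
  moreover have "a \<le> x 1" "x N \<le> b" using bounds[of 1] bounds[of N] assms by auto
  ultimately show "ordered_between N a b x" by (simp add: ordered_between_def)
qed

lemma pairing_finite: "pairing n P \<Longrightarrow> finite P"
  using finite_subset[of P "{1..2*n} \<times> {1..2*n}"] by (simp add: pairing_def)

lemma pairings_finite: "finite {P. pairing n P}"
  by (rule finite_subset[of _ "Pow ({1..2*n} \<times> {1..2*n})"]) (auto simp: pairing_def)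

lemma pairing_card_fst:
  assumes "pairing n P"
  shows "card (fst ` P) = n" and "inj_on fst P"
proof -
  have P: "card P = n" "fst ` P \<union> snd ` P = {1..2*n}" and fin: "finite P"
    using assms pairing_finite[OF assms] by (simp_all add: pairing_def)
  have "2*n \<le> card (fst ` P) + card (snd ` P)"
    using card_Un_le[of "fst ` P" "snd ` P"] P(2) by simp
  moreover have "card (fst ` P) \<le> n" "card (snd ` P) \<le> n"
    using card_image_le[OF fin, of fst] card_image_le[OF fin, of snd] P(1) by simp_all
  ultimately show "card (fst ` P) = n" by linarith
  then show "inj_on fst P" using fin P(1) by (simp add: inj_on_iff_eq_card)
qed

lemma pairing_iota:
  assumes "pairing n P"
  shows "fst ` P = pairing_iota P ` {1..n}"
    and "\<And>m m'. m \<in> {1..n} \<Longrightarrow> m' \<in> {1..n} \<Longrightarrow> m < m' \<Longrightarrow> pairing_iota P m < pairing_iota P m'"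
proof -
  define xs where "xs = sorted_list_of_set (fst ` P)"
  have len: "length xs = n" and set: "set xs = fst ` P" and sorted: "sorted_wrt (<) xs"
    using pairing_card_fst[OF assms] pairing_finite[OF assms] by (simp_all add: xs_def)
  have iota: "pairing_iota P m = xs ! (m - 1)" for m by (simp add: pairing_iota_def xs_def)
  have "set xs = (\<lambda>m. xs ! (m - 1)) ` {1..n}"
    unfolding set_conv_nth len by (force intro: rev_image_eqI[of "Suc _"])
  then show "fst ` P = pairing_iota P ` {1..n}" using set iota by simp
  show "pairing_iota P m < pairing_iota P m'" if "m \<in> {1..n}" "m' \<in> {1..n}" "m < m'" for m m'
  proof -
    have "xs ! (m - 1) < xs ! (m' - 1)"
      by (rule sorted_wrt_nth_less[OF sorted]) (use that len in auto)
    then show ?thesis by (simp only: iota)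
  qed
qed

lemma pairing_sigma:
  assumes "pairing n P" and "m \<in> {1..n}"
  shows "(pairing_iota P m, pairing_sigma P m) \<in> P" and "pairing_iota P m < pairing_sigma P m"
proof -
  obtain s where s: "(pairing_iota P m, s) \<in> P"
    using pairing_iota(1)[OF assms(1)] assms(2) by force
  have "(pairing_iota P m, s') \<in> P \<Longrightarrow> s' = s" for s'
    using inj_onD[OF pairing_card_fst(2)[OF assms(1)] _ s] by auto
  then have "pairing_sigma P m = s"
    unfolding pairing_sigma_def using s by (intro the_equality)
  then show mem: "(pairing_iota P m, pairing_sigma P m) \<in> P" using s by simp
  moreover have "\<forall>(i, s) \<in> P. i < s" using assms(1) by (simp add: pairing_def)
  ultimately show "pairing_iota P m < pairing_sigma P m" by blast
qed

definition pairing_pos :: "(nat \<times> nat) set \<Rightarrow> nat \<Rightarrow> nat" where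
  "pairing_pos P k = (if even k then pairing_iota P (k div 2 + 1) else pairing_sigma P (k div 2 + 1))"

lemma pairing_pos_slots:
  assumes "m \<in> {1..n}"
  shows "pairing_pos P (2*m-2) = pairing_iota P m" and "pairing_pos P (2*m-1) = pairing_sigma P m"
  using even_slot[OF assms] odd_slot[OF assms] by (auto simp: pairing_pos_def)

lemma pairing_arg_eq: "pairing_arg n P tt = (\<lambda>k\<in>{..<2*n}. tt (pairing_pos P k))"
  by (rule ext) (simp add: pairing_arg_def pairing_pos_def)

definition pairs_of_slots :: "nat \<Rightarrow> (nat \<Rightarrow> nat) \<Rightarrow> (nat \<times> nat) set" where
  "pairs_of_slots n h = (\<lambda>m. (h (2*m-2), h (2*m-1))) ` {1..n}"

lemma pairs_of_slots_cong:
  assumes "\<And>k. k < 2*n \<Longrightarrow> h k = h' k"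
  shows "pairs_of_slots n h = pairs_of_slots n h'"
  unfolding pairs_of_slots_def
proof (intro image_cong refl)
  fix m assume m: "m \<in> {1..n}"
  show "(h (2*m-2), h (2*m-1)) = (h' (2*m-2), h' (2*m-1))"
    using assms[of "2*m-2"] assms[of "2*m-1"] even_slot[OF m] odd_slot[OF m] by simp
qed

lemma fst_pairs_of_slots: "fst ` pairs_of_slots n h = (\<lambda>m. h (2*m-2)) ` {1..n}"
  and snd_pairs_of_slots: "snd ` pairs_of_slots n h = (\<lambda>m. h (2*m-1)) ` {1..n}"
  by (simp_all add: pairs_of_slots_def image_image)

lemma pairing_eq_pairs_of_slots:
  assumes "pairing n P"
  shows "P = pairs_of_slots n (pairing_pos P)"
proof -
  have "P = (\<lambda>m. (pairing_iota P m, pairing_sigma P m)) ` {1..n}"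
  proof (intro subset_antisym subsetI)
    fix p assume p: "p \<in> P"
    then obtain m where m: "m \<in> {1..n}" "fst p = pairing_iota P m"
      using pairing_iota(1)[OF assms] by force
    then have "p = (pairing_iota P m, pairing_sigma P m)"
      using inj_onD[OF pairing_card_fst(2)[OF assms] _ p pairing_sigma(1)[OF assms m(1)]] by simp
    then show "p \<in> (\<lambda>m. (pairing_iota P m, pairing_sigma P m)) ` {1..n}" using m(1) by blast
  qed (use pairing_sigma(1)[OF assms] in auto)
  also have "\<dots> = pairs_of_slots n (pairing_pos P)"
    unfolding pairs_of_slots_def using pairing_pos_slots by (intro image_cong) auto
  finally show ?thesis .
qed

lemma lessThan_double_eq: "{..<2*n} = (\<lambda>m. 2*m-2) ` {1..n} \<union> (\<lambda>m::nat. 2*m-1) ` {1..n}"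
proof (intro subset_antisym subsetI)
  fix k assume "k \<in> {..<2*n}"
  then show "k \<in> (\<lambda>m. 2*m-2) ` {1..n} \<union> (\<lambda>m. 2*m-1) ` {1..n}"
    by (auto elim: slot_cases[of k n])
qed (use even_slot odd_slot in auto)

lemma image_lessThan_double:
  "h ` {..<2*n} = fst ` pairs_of_slots n h \<union> snd ` pairs_of_slots n h"
  by (simp only: lessThan_double_eq image_Un image_image fst_pairs_of_slots snd_pairs_of_slots)

lemma pairing_pos_bij:
  assumes "pairing n P"
  shows "bij_betw (pairing_pos P) {..<2*n} {1..2*n}"
proof -
  have "pairing_pos P ` {..<2*n} = fst ` P \<union> snd ` P"
    using image_lessThan_double[of "pairing_pos P" n] pairing_eq_pairs_of_slots[OF assms] by simp
  also have "\<dots> = {1..2*n}" using assms by (simp add: pairing_def)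
  finally have image: "pairing_pos P ` {..<2*n} = {1..2*n}" .
  then have "inj_on (pairing_pos P) {..<2*n}"
    by (subst inj_on_iff_eq_card) simp_all
  with image show ?thesis by (simp add: bij_betw_def)
qed

definition admissible_slots :: "nat \<Rightarrow> (nat \<Rightarrow> 'a::linorder) \<Rightarrow> bool" where
  "admissible_slots n h \<longleftrightarrow> (\<forall>m\<in>{1..n}. \<forall>m'\<in>{1..n}. m < m' \<longrightarrow> h (2*m-2) < h (2*m'-2)) \<and>
     (\<forall>m\<in>{1..n}. h (2*m-2) < h (2*m-1))"

lemma admissible_slots_cong:
  assumes "admissible_slots n h" and "\<And>k. k < 2*n \<Longrightarrow> h k = h' k"
  shows "admissible_slots n h'"
proof -
  have "h (2*m-2) = h' (2*m-2)" "h (2*m-1) = h' (2*m-1)" if "m \<in> {1..n}" for m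
    using assms(2) even_slot[OF that] odd_slot[OF that] by simp_all
  with assms(1) show ?thesis by (simp add: admissible_slots_def)
qed

lemma admissible_pairing_pos:
  assumes "pairing n P"
  shows "admissible_slots n (pairing_pos P)"
  unfolding admissible_slots_def
proof (intro conjI ballI impI)
  fix m m' assume "m \<in> {1..n}" "m' \<in> {1..n}" "m < m'"
  then show "pairing_pos P (2*m-2) < pairing_pos P (2*m'-2)"
    using pairing_iota(2)[OF assms] by (simp only: pairing_pos_slots)
next
  fix m assume "m \<in> {1..n}"
  then show "pairing_pos P (2*m-2) < pairing_pos P (2*m-1)"
    using pairing_sigma(2)[OF assms] by (simp only: pairing_pos_slots)
qed

lemma sorted_list_of_set_image_strict_mono:
  fixes f :: "nat \<Rightarrow> 'a::linorder"
  assumes "strict_mono_on {1..n} f" and "m \<in> {1..n}"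
  shows "sorted_list_of_set (f ` {1..n}) ! (m - 1) = f m"
proof -
  define xs where "xs = map f [1..<n+1]"
  have "sorted_wrt (<) xs"
    unfolding xs_def sorted_wrt_map using assms(1)
    by (intro sorted_wrt_mono_rel[OF _ sorted_wrt_upt]) (auto simp: strict_mono_on_def)
  then have "sorted_list_of_set (set xs) = xs"
    by (simp add: sorted_list_of_set_sort_remdups strict_sorted_iff distinct_remdups_id sorted_sort_id)
  moreover have "set xs = f ` {1..n}" by (auto simp: xs_def)
  moreover have "m - 1 < n" "Suc (m - 1) = m" using assms(2) by auto
  then have "xs ! (m - 1) = f m" by (simp add: xs_def del: upt_Suc)
  ultimately show ?thesis by simp
qed

lemma pairing_pairs_of_slots:
  assumes h: "bij_betw h {..<2*n} {1..2*n}" and adm: "admissible_slots n h"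
  shows "pairing n (pairs_of_slots n h)" and "\<And>k. k < 2*n \<Longrightarrow> pairing_pos (pairs_of_slots n h) k = h k"
proof -
  define Q where "Q = pairs_of_slots n h"
  have mono: "strict_mono_on {1..n} (\<lambda>m. h (2*m-2))"
    using adm by (auto simp: admissible_slots_def strict_mono_on_def)
  have "inj_on (\<lambda>m. (h (2*m-2), h (2*m-1))) {1..n}"
    by (rule inj_on_imageI2[of fst]) (unfold comp_def fst_conv, rule strict_mono_on_imp_inj_on[OF mono])
  then have card: "card Q = n" by (simp add: Q_def pairs_of_slots_def card_image)
  have range: "fst ` Q \<union> snd ` Q = {1..2*n}"
    using image_lessThan_double[of h n] h by (simp add: Q_def bij_betw_def)
  have "Q \<subseteq> {1..2*n} \<times> {1..2*n}"
  proof
    fix p assume "p \<in> Q"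
    then have "fst p \<in> {1..2*n}" "snd p \<in> {1..2*n}" using range by blast+
    then show "p \<in> {1..2*n} \<times> {1..2*n}" by (simp add: mem_Times_iff)
  qed
  moreover have "\<forall>(i, s) \<in> Q. i < s" using adm by (auto simp: Q_def pairs_of_slots_def admissible_slots_def)
  ultimately show Q: "pairing n (pairs_of_slots n h)"
    using card range by (simp add: pairing_def Q_def)
  have iota: "pairing_iota Q m = h (2*m-2)" if "m \<in> {1..n}" for m
    using sorted_list_of_set_image_strict_mono[OF mono that]
    by (simp add: pairing_iota_def Q_def fst_pairs_of_slots)
  have sigma: "pairing_sigma Q m = h (2*m-1)" if m: "m \<in> {1..n}" for m
  proof -
    have "(h (2*m-2), h (2*m-1)) \<in> Q" using m by (auto simp: Q_def pairs_of_slots_def)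
    moreover have "(h (2*m-2), pairing_sigma Q m) \<in> Q"
      using pairing_sigma(1)[OF Q[folded Q_def] m] iota[OF m] by simp
    ultimately show ?thesis
      using inj_onD[OF pairing_card_fst(2)[OF Q[folded Q_def]]] by fastforce
  qed
  show "pairing_pos Q k = h k" if "k < 2*n" for k
  proof (rule slot_cases[OF that])
    fix m assume "m \<in> {1..n}" "k = 2*m-2"
    then show ?thesis by (simp only: pairing_pos_slots(1) iota)
  next
    fix m assume "m \<in> {1..n}" "k = 2*m-1"
    then show ?thesis by (simp only: pairing_pos_slots(2) sigma)
  qed
qed

section \<open>Ranks\<close>

definition rank_in :: "'a set \<Rightarrow> ('a \<Rightarrow> 'b::linorder) \<Rightarrow> 'a \<Rightarrow> nat" where
  "rank_in K y k = card {j \<in> K. y j \<le> y k}"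

lemma rank_in_less:
  assumes "finite K" "b \<in> K" "y a < y b"
  shows "rank_in K y a < rank_in K y b"
proof -
  have "{j \<in> K. y j \<le> y a} \<subseteq> {j \<in> K. y j \<le> y b}" using assms(3) by auto
  moreover have "b \<in> {j \<in> K. y j \<le> y b}" "b \<notin> {j \<in> K. y j \<le> y a}" using assms(2,3) by auto
  ultimately have "{j \<in> K. y j \<le> y a} \<subset> {j \<in> K. y j \<le> y b}" by blast
  then show ?thesis unfolding rank_in_def by (intro psubset_card_mono) (use assms(1) in simp_all)
qed

lemma rank_in_less_iff:
  assumes "finite K" "inj_on y K" "a \<in> K" "b \<in> K"
  shows "rank_in K y a < rank_in K y b \<longleftrightarrow> y a < y b"
proof
  assume less: "rank_in K y a < rank_in K y b"
  show "y a < y b"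
  proof (rule ccontr)
    assume "\<not> y a < y b"
    then have "y b < y a \<or> a = b" using inj_onD[OF assms(2) _ assms(3,4)] by force
    then show False using rank_in_less[OF assms(1,3), of y b] less by auto
  qed
qed (rule rank_in_less[OF assms(1,4)])

lemma rank_in_bij:
  assumes "finite K" "inj_on y K"
  shows "bij_betw (rank_in K y) K {1..card K}"
proof -
  have inj: "inj_on (rank_in K y) K"
  proof (rule inj_onI, rule ccontr)
    fix a b assume ab: "a \<in> K" "b \<in> K" "rank_in K y a = rank_in K y b" "a \<noteq> b"
    then have "y a < y b \<or> y b < y a" using inj_onD[OF assms(2)] by (metis neqE)
    then show False using ab rank_in_less_iff[OF assms] by (metis less_irrefl)
  qed
  have "rank_in K y k \<in> {1..card K}" if "k \<in> K" for k
  proof -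
    have "0 < rank_in K y k" unfolding rank_in_def
      by (subst card_gt_0_iff) (use that assms(1) in auto)
    moreover have "rank_in K y k \<le> card K" unfolding rank_in_def using assms(1) by (intro card_mono) auto
    ultimately show ?thesis by simp
  qed
  then have "rank_in K y ` K \<subseteq> {1..card K}" by blast
  moreover have "card (rank_in K y ` K) = card {1..card K}" using inj by (simp add: card_image)
  ultimately have "rank_in K y ` K = {1..card K}" by (intro card_subset_eq) simp_all
  with inj show ?thesis by (simp add: bij_betw_def)
qed

lemma rank_in_bij_self:
  assumes h: "bij_betw h K {1..card K}" and k: "k \<in> K"
  shows "rank_in K h k = h k"
proof -
  have "h ` {j \<in> K. h j \<le> h k} = {1..h k}"
  proof (intro subset_antisym subsetI)
    fix i assume "i \<in> h ` {j \<in> K. h j \<le> h k}"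
    then obtain j where "j \<in> K" "h j \<le> h k" "i = h j" by blast
    then show "i \<in> {1..h k}" using bij_betw_apply[OF h] by fastforce
  next
    fix i assume i: "i \<in> {1..h k}"
    then have "i \<in> h ` K" using bij_betw_apply[OF h k] h by (simp add: bij_betw_def)
    then show "i \<in> h ` {j \<in> K. h j \<le> h k}" using i by auto
  qed
  moreover have "inj_on h {j \<in> K. h j \<le> h k}"
    using bij_betw_imp_inj_on[OF h] by (rule inj_on_subset) blast
  ultimately show ?thesis unfolding rank_in_def by (metis card_atLeastAtMost card_image diff_Suc_1)
qed

lemma rank_in_eq_of_order_iso:
  assumes "inj_on y K" and h: "bij_betw h K {1..card K}"
    and iso: "\<And>a b. a \<in> K \<Longrightarrow> b \<in> K \<Longrightarrow> h a < h b \<Longrightarrow> y a < y b" and k: "k \<in> K"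
  shows "rank_in K y k = h k"
proof -
  have "y j \<le> y k \<longleftrightarrow> h j \<le> h k" if j: "j \<in> K" for j
  proof (cases "h j" "h k" rule: linorder_cases)
    case equal
    then have "j = k" using inj_onD[OF bij_betw_imp_inj_on[OF h] _ j k] by simp
    then show ?thesis by simp
  qed (use iso[OF j k] iso[OF k j] in auto)
  then have "{j \<in> K. y j \<le> y k} = {j \<in> K. h j \<le> h k}" by blast
  then show ?thesis using rank_in_bij_self[OF h k] by (simp add: rank_in_def)
qed

lemma sorted_inv_into_iff_rank_in:
  assumes "finite K" "inj_on y K" and h: "bij_betw h K {1..card K}"
  shows "(\<forall>i\<in>{1..card K}. \<forall>j\<in>{1..card K}. i \<le> j \<longrightarrow> y (inv_into K h i) \<le> y (inv_into K h j))
    \<longleftrightarrow> (\<forall>k\<in>K. h k = rank_in K y k)"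
proof
  assume sorted: "\<forall>i\<in>{1..card K}. \<forall>j\<in>{1..card K}. i \<le> j \<longrightarrow> y (inv_into K h i) \<le> y (inv_into K h j)"
  have "y a < y b" if "a \<in> K" "b \<in> K" "h a < h b" for a b
  proof -
    have "y (inv_into K h (h a)) \<le> y (inv_into K h (h b))"
      using sorted bij_betw_apply[OF h that(1)] bij_betw_apply[OF h that(2)] that(3) by simp
    then have "y a \<le> y b" by (simp only: bij_betw_inv_into_left[OF h that(1)] bij_betw_inv_into_left[OF h that(2)])
    moreover have "y a \<noteq> y b" using inj_onD[OF assms(2) _ that(1,2)] that(3) by auto
    ultimately show ?thesis by simp
  qed
  then show "\<forall>k\<in>K. h k = rank_in K y k" using rank_in_eq_of_order_iso[OF assms(2) h] by metis
next
  assume rank: "\<forall>k\<in>K. h k = rank_in K y k"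
  show "\<forall>i\<in>{1..card K}. \<forall>j\<in>{1..card K}. i \<le> j \<longrightarrow> y (inv_into K h i) \<le> y (inv_into K h j)"
  proof (intro ballI impI)
    fix i j assume ij: "i \<in> {1..card K}" "j \<in> {1..card K}" "i \<le> j"
    define a b where "a = inv_into K h i" and "b = inv_into K h j"
    have ab: "a \<in> K" "b \<in> K" "h a = i" "h b = j"
      using bij_betw_apply[OF bij_betw_inv_into[OF h]] bij_betw_inv_into_right[OF h] ij(1,2)
      by (simp_all add: a_def b_def)
    have "\<not> y b < y a" using rank_in_less[OF assms(1) ab(1), of y b] rank ab ij(3) by auto
    then show "y (inv_into K h i) \<le> y (inv_into K h j)" by (simp add: a_def b_def)
  qed
qed

section \<open>The pairing that orders a point\<close>

lemma ball_bij_betw: "bij_betw f A B \<Longrightarrow> (\<forall>x\<in>A. Q (f x)) \<longleftrightarrow> (\<forall>y\<in>B. Q y)"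
  unfolding bij_betw_imp_surj_on[symmetric, of f A B] by simp

definition pairing_arg_inv :: "nat \<Rightarrow> (nat \<times> nat) set \<Rightarrow> (nat \<Rightarrow> real) \<Rightarrow> (nat \<Rightarrow> real)" where
  "pairing_arg_inv n P y = (\<lambda>i\<in>{1..2*n}. y (inv_into {..<2*n} (pairing_pos P) i))"

lemma ordered_pairing_arg_inv_iff:
  assumes n: "n \<ge> 1" and P: "pairing n P" and y: "inj_on y {..<2*n}"
  shows "ordered_between (2*n) t0 t (pairing_arg_inv n P y) \<longleftrightarrow>
    (\<forall>k<2*n. pairing_pos P k = rank_in {..<2*n} y k) \<and> (\<forall>k<2*n. t0 \<le> y k \<and> y k \<le> t)"
proof -
  have h: "bij_betw (pairing_pos P) {..<2*n} {1..card {..<2*n}}" using pairing_pos_bij[OF P] by simp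
  have bounds: "(\<forall>i\<in>{1..2*n}. t0 \<le> y (inv_into {..<2*n} (pairing_pos P) i) \<and> y (inv_into {..<2*n} (pairing_pos P) i) \<le> t)
      \<longleftrightarrow> (\<forall>k<2*n. t0 \<le> y k \<and> y k \<le> t)"
    using ball_bij_betw[OF bij_betw_inv_into[OF pairing_pos_bij[OF P]], of "\<lambda>k. t0 \<le> y k \<and> y k \<le> t"]
    by (simp only: lessThan_iff Ball_def)
  have "ordered_between (2*n) t0 t (pairing_arg_inv n P y) \<longleftrightarrow>
    (\<forall>i\<in>{1..2*n}. \<forall>j\<in>{1..2*n}. i \<le> j \<longrightarrow>
       y (inv_into {..<2*n} (pairing_pos P) i) \<le> y (inv_into {..<2*n} (pairing_pos P) j)) \<and>
    (\<forall>i\<in>{1..2*n}. t0 \<le> y (inv_into {..<2*n} (pairing_pos P) i) \<and> y (inv_into {..<2*n} (pairing_pos P) i) \<le> t)"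
    using n by (subst ordered_between_iff) (simp_all add: pairing_arg_inv_def)
  then show ?thesis
    using sorted_inv_into_iff_rank_in[OF finite_lessThan y h] bounds by (simp add: Ball_def)
qed

definition interleaved_order :: "nat \<Rightarrow> real \<Rightarrow> real \<Rightarrow> (nat \<Rightarrow> real) \<Rightarrow> bool" where
  "interleaved_order n t0 t y \<longleftrightarrow> ordered_between n t0 t (\<lambda>m. y (2*m-2)) \<and>
     (\<forall>m\<in>{1..n}. y (2*m-2) \<le> y (2*m-1) \<and> y (2*m-1) \<le> t)"

lemma interleaved_order_bounds:
  assumes n: "n \<ge> 1" and y: "interleaved_order n t0 t y" and k: "k < 2*n"
  shows "t0 \<le> y k \<and> y k \<le> t"
proof -
  have ev: "t0 \<le> y (2*m-2)" "y (2*m-2) \<le> t" and od: "y (2*m-2) \<le> y (2*m-1)" "y (2*m-1) \<le> t"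
    if "m \<in> {1..n}" for m
    using y that by (auto simp: interleaved_order_def ordered_between_iff[OF n])
  show ?thesis
  proof (rule slot_cases[OF k])
    fix m assume "m \<in> {1..n}" "k = 2*m-2"
    then show ?thesis using ev by simp
  next
    fix m assume "m \<in> {1..n}" "k = 2*m-1"
    then show ?thesis using ev(1) od by (meson order.trans)
  qed
qed

lemma interleaved_order_iff_admissible:
  assumes n: "n \<ge> 1" and y: "inj_on y {..<2*n}"
  shows "interleaved_order n t0 t y \<longleftrightarrow> admissible_slots n y \<and> (\<forall>k<2*n. t0 \<le> y k \<and> y k \<le> t)"
proof
  assume ord: "interleaved_order n t0 t y"
  then have mono: "\<And>m m'. m \<in> {1..n} \<Longrightarrow> m' \<in> {1..n} \<Longrightarrow> m \<le> m' \<Longrightarrow> y (2*m-2) \<le> y (2*m'-2)"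
    and pair: "\<And>m. m \<in> {1..n} \<Longrightarrow> y (2*m-2) \<le> y (2*m-1)"
    unfolding interleaved_order_def ordered_between_iff[OF n] by blast+
  have "y (2*m-2) < y (2*m'-2)" if "m \<in> {1..n}" "m' \<in> {1..n}" "m < m'" for m m'
    using mono[OF that(1,2)] inj_onD[OF y, of "2*m-2" "2*m'-2"] that even_slot[OF that(1)] even_slot[OF that(2)]
    by fastforce
  moreover have "y (2*m-2) < y (2*m-1)" if "m \<in> {1..n}" for m
    using pair[OF that] inj_onD[OF y, of "2*m-2" "2*m-1"] even_slot[OF that] odd_slot[OF that] by fastforce
  ultimately show "admissible_slots n y \<and> (\<forall>k<2*n. t0 \<le> y k \<and> y k \<le> t)"
    using interleaved_order_bounds[OF n ord] by (simp add: admissible_slots_def)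
next
  assume "admissible_slots n y \<and> (\<forall>k<2*n. t0 \<le> y k \<and> y k \<le> t)"
  then have strict: "\<And>m m'. m \<in> {1..n} \<Longrightarrow> m' \<in> {1..n} \<Longrightarrow> m < m' \<Longrightarrow> y (2*m-2) < y (2*m'-2)"
    and pair: "\<And>m. m \<in> {1..n} \<Longrightarrow> y (2*m-2) < y (2*m-1)"
    and bounds: "\<And>k. k < 2*n \<Longrightarrow> t0 \<le> y k \<and> y k \<le> t"
    unfolding admissible_slots_def by blast+
  have "y (2*m-2) \<le> y (2*m'-2)" if "m \<in> {1..n}" "m' \<in> {1..n}" "m \<le> m'" for m m'
    using strict[OF that(1,2)] that(3) by (cases "m = m'") (simp_all add: less_imp_le)
  moreover have "t0 \<le> y (2*m-2) \<and> y (2*m-2) \<le> t" "y (2*m-1) \<le> t" if "m \<in> {1..n}" for m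
    using bounds even_slot[OF that] odd_slot[OF that] by simp_all
  ultimately show "interleaved_order n t0 t y"
    using pair unfolding interleaved_order_def ordered_between_iff[OF n] by (simp add: less_imp_le)
qed

lemma admissible_slots_rank_in_iff:
  assumes y: "inj_on y {..<2*n}"
  shows "admissible_slots n (rank_in {..<2*n} y) \<longleftrightarrow> admissible_slots n y"
proof -
  let ?r = "rank_in {..<2*n} y"
  have less: "?r a < ?r b \<longleftrightarrow> y a < y b" if "a < 2*n" "b < 2*n" for a b
    using rank_in_less_iff[OF finite_lessThan y] that by simp
  have "(\<forall>m\<in>{1..n}. \<forall>m'\<in>{1..n}. m < m' \<longrightarrow> ?r (2*m-2) < ?r (2*m'-2)) \<longleftrightarrow>
      (\<forall>m\<in>{1..n}. \<forall>m'\<in>{1..n}. m < m' \<longrightarrow> y (2*m-2) < y (2*m'-2))"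
    using less even_slot by blast
  moreover have "(\<forall>m\<in>{1..n}. ?r (2*m-2) < ?r (2*m-1)) \<longleftrightarrow> (\<forall>m\<in>{1..n}. y (2*m-2) < y (2*m-1))"
    using less even_slot odd_slot by blast
  ultimately show ?thesis unfolding admissible_slots_def by (simp only:)
qed

lemma pairings_ordering:
  assumes n: "n \<ge> 1" and y: "inj_on y {..<2*n}"
  shows "{P. pairing n P \<and> ordered_between (2*n) t0 t (pairing_arg_inv n P y)} =
    (if interleaved_order n t0 t y then {pairs_of_slots n (rank_in {..<2*n} y)} else {})"
proof -
  let ?r = "rank_in {..<2*n} y"
  have sound: "P = pairs_of_slots n ?r \<and> interleaved_order n t0 t y"
    if P: "pairing n P" and ord: "ordered_between (2*n) t0 t (pairing_arg_inv n P y)" for P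
  proof -
    have pos: "\<And>k. k < 2*n \<Longrightarrow> pairing_pos P k = ?r k" and bounds: "\<forall>k<2*n. t0 \<le> y k \<and> y k \<le> t"
      using ord ordered_pairing_arg_inv_iff[OF n P y] by simp_all
    have "P = pairs_of_slots n ?r"
      using pairing_eq_pairs_of_slots[OF P] pairs_of_slots_cong[OF pos] by simp
    moreover have "admissible_slots n ?r" by (rule admissible_slots_cong[OF admissible_pairing_pos[OF P] pos])
    ultimately show ?thesis
      using interleaved_order_iff_admissible[OF n y] admissible_slots_rank_in_iff[OF y] bounds by simp
  qed
  have complete: "pairing n (pairs_of_slots n ?r) \<and> ordered_between (2*n) t0 t (pairing_arg_inv n (pairs_of_slots n ?r) y)"
    if "interleaved_order n t0 t y"
  proof -
    have adm: "admissible_slots n ?r" and bounds: "\<forall>k<2*n. t0 \<le> y k \<and> y k \<le> t"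
      using that interleaved_order_iff_admissible[OF n y] admissible_slots_rank_in_iff[OF y] by simp_all
    have r: "bij_betw ?r {..<2*n} {1..2*n}" using rank_in_bij[OF finite_lessThan y] by simp
    note Q = pairing_pairs_of_slots[OF r adm]
    show ?thesis using Q ordered_pairing_arg_inv_iff[OF n Q(1) y] bounds by simp
  qed
  show ?thesis
  proof (cases "interleaved_order n t0 t y")
    case True
    then show ?thesis using sound complete[OF True] by (simp only: if_True) blast
  next
    case False
    then show ?thesis using sound by (simp only: if_False) blast
  qed
qed

lemma sum_pairings_ordering:
  fixes c :: real
  assumes "n \<ge> 1" and "inj_on y {..<2*n}"
  shows "(\<Sum>P\<in>{P. pairing n P}. if ordered_between (2*n) t0 t (pairing_arg_inv n P y) then c else 0) =
    (if interleaved_order n t0 t y then c else 0)"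
proof -
  have "(\<Sum>P\<in>{P. pairing n P}. if ordered_between (2*n) t0 t (pairing_arg_inv n P y) then c else 0)
      = (\<Sum>P\<in>{P. pairing n P \<and> ordered_between (2*n) t0 t (pairing_arg_inv n P y)}. c)"
    by (simp only: sum.inter_filter[OF pairings_finite, symmetric] mem_Collect_eq)
  also have "\<dots> = (if interleaved_order n t0 t y then c else 0)"
    by (simp add: pairings_ordering[OF assms])
  finally show ?thesis .
qed

section \<open>Coordinate maps preserving product measure\<close>

lemma (in product_sigma_finite) distr_PiM_reindex_bij:
  assumes J: "finite J" and k: "bij_betw k J I"
  shows "distr (Pi\<^sub>M I M) (Pi\<^sub>M J (\<lambda>j. M (k j))) (\<lambda>x. \<lambda>j\<in>J. x (k j)) = Pi\<^sub>M J (\<lambda>j. M (k j))"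
proof (rule product_sigma_finite.PiM_eqI)
  show "product_sigma_finite (\<lambda>j. M (k j))"
    by (simp add: product_sigma_finite_def sigma_finite_measures)
  have I: "finite I" using bij_betw_finite[OF k] J by simp
  have kI: "j \<in> J \<Longrightarrow> k j \<in> I" for j using bij_betw_apply[OF k] .
  have invJ: "i \<in> I \<Longrightarrow> inv_into J k i \<in> J" for i using bij_betw_apply[OF bij_betw_inv_into[OF k]] .
  have kinv: "i \<in> I \<Longrightarrow> k (inv_into J k i) = i" for i using bij_betw_inv_into_right[OF k] .
  have invk: "j \<in> J \<Longrightarrow> inv_into J k (k j) = j" for j using bij_betw_inv_into_left[OF k] .
  have meas: "(\<lambda>x. \<lambda>j\<in>J. x (k j)) \<in> Pi\<^sub>M I M \<rightarrow>\<^sub>M Pi\<^sub>M J (\<lambda>j. M (k j))"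
    using kI by (intro measurable_restrict measurable_component_singleton) auto
  fix A assume A: "\<And>j. j \<in> J \<Longrightarrow> A j \<in> sets (M (k j))"
  have A': "A (inv_into J k i) \<in> sets (M i)" if "i \<in> I" for i
    using A[OF invJ[OF that]] kinv[OF that] by simp
  have "(\<lambda>x. \<lambda>j\<in>J. x (k j)) -` Pi\<^sub>E J A \<inter> space (Pi\<^sub>M I M) = Pi\<^sub>E I (\<lambda>i. A (inv_into J k i))"
  proof (intro set_eqI iffI)
    fix x assume "x \<in> (\<lambda>x. \<lambda>j\<in>J. x (k j)) -` Pi\<^sub>E J A \<inter> space (Pi\<^sub>M I M)"
    then show "x \<in> Pi\<^sub>E I (\<lambda>i. A (inv_into J k i))"
      using invJ kinv by (force simp: space_PiM PiE_iff)
  next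
    fix x assume "x \<in> Pi\<^sub>E I (\<lambda>i. A (inv_into J k i))"
    then show "x \<in> (\<lambda>x. \<lambda>j\<in>J. x (k j)) -` Pi\<^sub>E J A \<inter> space (Pi\<^sub>M I M)"
      using kI invk A'[THEN sets.sets_into_space] by (force simp: space_PiM PiE_iff)
  qed
  then have "emeasure (distr (Pi\<^sub>M I M) (Pi\<^sub>M J (\<lambda>j. M (k j))) (\<lambda>x. \<lambda>j\<in>J. x (k j))) (Pi\<^sub>E J A)
      = emeasure (Pi\<^sub>M I M) (Pi\<^sub>E I (\<lambda>i. A (inv_into J k i)))"
    using meas A J by (subst emeasure_distr) (auto intro!: sets_PiM_I_finite)
  also have "\<dots> = (\<Prod>i\<in>I. emeasure (M i) (A (inv_into J k i)))"
    using I A' by (simp add: emeasure_PiM)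
  also have "\<dots> = (\<Prod>j\<in>J. emeasure (M (k j)) (A j))"
    using prod.reindex_bij_betw[OF k, of "\<lambda>i. emeasure (M i) (A (inv_into J k i))"] invk
    by (auto intro: prod.cong)
  finally show "emeasure (distr (Pi\<^sub>M I M) (Pi\<^sub>M J (\<lambda>j. M (k j))) (\<lambda>x. \<lambda>j\<in>J. x (k j))) (Pi\<^sub>E J A)
    = (\<Prod>j\<in>J. emeasure (M (k j)) (A j))" .
qed (use assms in simp_all)

lemma prod_lessThan_double:
  fixes f :: "nat \<Rightarrow> 'a::comm_monoid_mult"
  shows "(\<Prod>m\<in>{1..n}. f (2*m-2)) * (\<Prod>m\<in>{1..n}. f (2*m-1)) = (\<Prod>k<2*n. f k)"
proof (induction n)
  case (Suc n)
  have "{..<2 * Suc n} = insert (2*n+1) (insert (2*n) {..<2*n})" by auto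
  then have "(\<Prod>k<2 * Suc n. f k) = f (2*n+1) * (f (2*n) * (\<Prod>k<2*n. f k))" by simp
  with Suc.IH show ?case by (simp add: prod.cl_ivl_Suc mult_ac)
qed simp

lemma interleave_arg_eq:
  "interleave_arg n u u' = (\<lambda>k\<in>{..<2*n}. if even k then u (k div 2 + 1) else u' (k div 2 + 1))"
  by (rule ext) (simp add: interleave_arg_def)

lemma interleave_arg_slots:
  assumes "m \<in> {1..n}"
  shows "interleave_arg n u u' (2*m-2) = u m" and "interleave_arg n u u' (2*m-1) = u' m"
  using even_slot[OF assms] odd_slot[OF assms] by (simp_all add: interleave_arg_def)

lemma measurable_interleave_arg:
  "(\<lambda>p. interleave_arg n (fst p) (snd p)) \<in> Pi\<^sub>M {1..n} (\<lambda>_. N) \<Otimes>\<^sub>M Pi\<^sub>M {1..n} (\<lambda>_. N) \<rightarrow>\<^sub>M Pi\<^sub>M {..<2*n} (\<lambda>_. N)"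
  unfolding interleave_arg_eq
proof (intro measurable_restrict)
  fix k assume k: "k \<in> {..<2*n}"
  then have "k div 2 + 1 \<in> {1..n}" by auto
  then show "(\<lambda>p. if even k then fst p (k div 2 + 1) else snd p (k div 2 + 1))
      \<in> Pi\<^sub>M {1..n} (\<lambda>_. N) \<Otimes>\<^sub>M Pi\<^sub>M {1..n} (\<lambda>_. N) \<rightarrow>\<^sub>M N"
    by (cases "even k") (simp_all add: measurable_compose[OF measurable_fst measurable_component_singleton]
        measurable_compose[OF measurable_snd measurable_component_singleton])
qed

lemma interleave_arg_in_PiE_iff:
  "interleave_arg n u u' \<in> Pi\<^sub>E {..<2*n} A \<longleftrightarrow> (\<forall>m\<in>{1..n}. u m \<in> A (2*m-2) \<and> u' m \<in> A (2*m-1))"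
proof -
  have "(\<forall>k<2*n. interleave_arg n u u' k \<in> A k) \<longleftrightarrow> (\<forall>m\<in>{1..n}. u m \<in> A (2*m-2) \<and> u' m \<in> A (2*m-1))"
  proof
    assume all: "\<forall>k<2*n. interleave_arg n u u' k \<in> A k"
    show "\<forall>m\<in>{1..n}. u m \<in> A (2*m-2) \<and> u' m \<in> A (2*m-1)"
    proof
      fix m assume m: "m \<in> {1..n}"
      then have "interleave_arg n u u' (2*m-2) \<in> A (2*m-2)" "interleave_arg n u u' (2*m-1) \<in> A (2*m-1)"
        using all even_slot[OF m] odd_slot[OF m] by blast+
      then show "u m \<in> A (2*m-2) \<and> u' m \<in> A (2*m-1)" by (simp only: interleave_arg_slots[OF m])
    qed
  next
    assume slots: "\<forall>m\<in>{1..n}. u m \<in> A (2*m-2) \<and> u' m \<in> A (2*m-1)"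
    show "\<forall>k<2*n. interleave_arg n u u' k \<in> A k"
    proof (intro allI impI)
      fix k assume "k < 2*n"
      then show "interleave_arg n u u' k \<in> A k"
        by (rule slot_cases) (use slots interleave_arg_slots in simp_all)
    qed
  qed
  moreover have "interleave_arg n u u' \<in> extensional {..<2*n}"
    by (simp add: interleave_arg_def extensional_def)
  ultimately show ?thesis unfolding PiE_iff by (simp only: Ball_def lessThan_iff simp_thms)
qed

lemma distr_interleave_arg:
  assumes "sigma_finite_measure N"
  shows "distr (Pi\<^sub>M {1..n} (\<lambda>_. N) \<Otimes>\<^sub>M Pi\<^sub>M {1..n} (\<lambda>_. N)) (Pi\<^sub>M {..<2*n} (\<lambda>_. N))
      (\<lambda>p. interleave_arg n (fst p) (snd p)) = Pi\<^sub>M {..<2*n} (\<lambda>_. N)"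
    (is "distr ?P ?Q ?f = ?Q")
proof -
  interpret product_sigma_finite "\<lambda>_. N" using assms by (simp add: product_sigma_finite_def)
  interpret sf: sigma_finite_measure "Pi\<^sub>M {1..n} (\<lambda>_. N)" by (rule sigma_finite) simp
  show ?thesis
  proof (rule PiM_eqI)
    fix A assume A: "\<And>k. k \<in> {..<2*n} \<Longrightarrow> A k \<in> sets N"
    have A': "A (2*m-2) \<in> sets N" "A (2*m-1) \<in> sets N" if "m \<in> {1..n}" for m
      using A even_slot[OF that] odd_slot[OF that] by simp_all
    have "?f -` Pi\<^sub>E {..<2*n} A \<inter> space ?P = Pi\<^sub>E {1..n} (\<lambda>m. A (2*m-2)) \<times> Pi\<^sub>E {1..n} (\<lambda>m. A (2*m-1))"
    proof (intro set_eqI)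
      fix p :: "(nat \<Rightarrow> real) \<times> (nat \<Rightarrow> real)"
      have "p \<in> ?f -` Pi\<^sub>E {..<2*n} A \<inter> space ?P \<longleftrightarrow>
          (\<forall>m\<in>{1..n}. fst p m \<in> A (2*m-2) \<and> snd p m \<in> A (2*m-1)) \<and>
          fst p \<in> Pi\<^sub>E {1..n} (\<lambda>_. space N) \<and> snd p \<in> Pi\<^sub>E {1..n} (\<lambda>_. space N)"
        by (simp add: interleave_arg_in_PiE_iff space_pair_measure space_PiM mem_Times_iff)
      also have "\<dots> \<longleftrightarrow> p \<in> Pi\<^sub>E {1..n} (\<lambda>m. A (2*m-2)) \<times> Pi\<^sub>E {1..n} (\<lambda>m. A (2*m-1))"
        using A'[THEN sets.sets_into_space] unfolding mem_Times_iff PiE_iff by blast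
      finally show "p \<in> ?f -` Pi\<^sub>E {..<2*n} A \<inter> space ?P \<longleftrightarrow>
          p \<in> Pi\<^sub>E {1..n} (\<lambda>m. A (2*m-2)) \<times> Pi\<^sub>E {1..n} (\<lambda>m. A (2*m-1))" .
    qed
    then have "emeasure (distr ?P ?Q ?f) (Pi\<^sub>E {..<2*n} A)
        = emeasure ?P (Pi\<^sub>E {1..n} (\<lambda>m. A (2*m-2)) \<times> Pi\<^sub>E {1..n} (\<lambda>m. A (2*m-1)))"
      using A by (subst emeasure_distr[OF measurable_interleave_arg]) (auto intro!: sets_PiM_I_finite)
    also have "\<dots> = emeasure (Pi\<^sub>M {1..n} (\<lambda>_. N)) (Pi\<^sub>E {1..n} (\<lambda>m. A (2*m-2))) *
        emeasure (Pi\<^sub>M {1..n} (\<lambda>_. N)) (Pi\<^sub>E {1..n} (\<lambda>m. A (2*m-1)))"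
      by (rule sf.emeasure_pair_measure_Times) (use A' in \<open>auto intro!: sets_PiM_I_finite\<close>)
    also have "\<dots> = (\<Prod>m\<in>{1..n}. emeasure N (A (2*m-2))) * (\<Prod>m\<in>{1..n}. emeasure N (A (2*m-1)))"
      by (simp only: emeasure_PiM[OF finite_atLeastAtMost A'(1)] emeasure_PiM[OF finite_atLeastAtMost A'(2)])
    also have "\<dots> = (\<Prod>k<2*n. emeasure N (A k))" by (rule prod_lessThan_double)
    finally show "emeasure (distr ?P ?Q ?f) (Pi\<^sub>E {..<2*n} A) = (\<Prod>k\<in>{..<2*n}. emeasure N (A k))" .
  qed simp_all
qed

lemma product_sigma_finite_lborel: "product_sigma_finite (\<lambda>_. lborel :: real measure)"
  by (simp add: product_sigma_finite_def lborel.sigma_finite_measure_axioms)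

lemma AE_PiM_lborel_neq:
  assumes J: "finite J" and ij: "i \<in> J" "j \<in> J" "i \<noteq> j"
  shows "AE y in lebR J. y i \<noteq> y j"
proof -
  interpret product_sigma_finite "\<lambda>_. lborel :: real measure" by (rule product_sigma_finite_lborel)
  \<comment> \<open>Integrating out coordinate i first, every fibre of the tie set is a single point.\<close>
  define D where "D = {y \<in> space (lebR J). y i = y j}"
  have D: "D \<in> sets (lebR J)" unfolding D_def
    using ij by (intro borel_measurable_eq measurable_component_singleton) auto
  have J_eq: "insert i (J - {i}) = J" using ij by auto
  have "emeasure (lebR J) D = (\<integral>\<^sup>+ y. indicator D y \<partial>lebR (insert i (J - {i})))"
    using D J_eq by simp
  also have "\<dots> = (\<integral>\<^sup>+ x. (\<integral>\<^sup>+ z. indicator D (x(i := z)) \<partial>lborel) \<partial>lebR (J - {i}))"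
    using J D J_eq by (intro product_nn_integral_insert) auto
  also have "\<dots> = (\<integral>\<^sup>+ x. (\<integral>\<^sup>+ z. indicator {x j} z \<partial>lborel) \<partial>lebR (J - {i}))"
  proof (intro nn_integral_cong)
    fix x z assume x: "x \<in> space (lebR (J - {i}))"
    then have "x(i := z) \<in> space (lebR J)" using ij by (auto simp: space_PiM PiE_iff extensional_def)
    then have "x(i := z) \<in> D \<longleftrightarrow> z = x j" using ij by (auto simp: D_def)
    then show "indicator D (x(i := z)) = (indicator {x j} z :: ennreal)" by (simp add: indicator_def)
  qed
  also have "\<dots> = 0" by (simp add: emeasure_lborel_singleton)
  finally have "D \<in> null_sets (lebR J)" using D by auto
  then show ?thesis by (rule AE_I') (auto simp: D_def)
qed

lemma AE_PiM_lborel_inj_on: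
  assumes "finite J"
  shows "AE y in lebR J. inj_on y J"
proof -
  have "AE y in lebR J. \<forall>i\<in>J. \<forall>j\<in>J. i \<noteq> j \<longrightarrow> y i \<noteq> y j"
  proof (intro AE_finite_allI assms)
    fix i j assume "i \<in> J" "j \<in> J"
    then show "AE y in lebR J. i \<noteq> j \<longrightarrow> y i \<noteq> y j"
      using AE_PiM_lborel_neq[OF assms] by (cases "i = j") auto
  qed
  then show ?thesis by eventually_elim (auto simp: inj_on_def)
qed

lemma locally_integrable_2n_measurable:
  assumes "locally_integrable_2n n g"
  shows "g \<in> borel_measurable (lebR {..<2*n})"
proof (rule borel_measurable_LIMSEQ_real)
  define g' where "g' R x = indicator {x. \<forall>i<2*n. \<bar>x i\<bar> \<le> real R} x *\<^sub>R g x" for R :: nat and x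
  show "g' R \<in> borel_measurable (lebR {..<2*n})" for R
    using assms unfolding locally_integrable_2n_def set_integrable_def g'_def
    by (intro borel_measurable_integrable) blast
  fix x :: "nat \<Rightarrow> real"
  define R0 where "R0 = nat \<lceil>\<Sum>i<2*n. \<bar>x i\<bar>\<rceil>"
  have "g' R x = g x" if "R0 \<le> R" for R
  proof -
    have "\<bar>x i\<bar> \<le> real R" if "i < 2*n" for i
    proof -
      have "\<bar>x i\<bar> \<le> (\<Sum>i<2*n. \<bar>x i\<bar>)" using that by (intro member_le_sum) auto
      also have "\<dots> \<le> real R0" unfolding R0_def by linarith
      finally show ?thesis using \<open>R0 \<le> R\<close> by linarith
    qed
    then show ?thesis by (simp add: g'_def)
  qed
  then show "(\<lambda>R. g' R x) \<longlonglongrightarrow> g x"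
    by (intro tendsto_eventually eventually_sequentiallyI)
qed

lemma locally_integrable_2n_integrable:
  assumes "locally_integrable_2n n g" and B: "B \<in> sets (lebR {..<2*n})"
    and bounded: "\<And>y k. y \<in> B \<Longrightarrow> k < 2*n \<Longrightarrow> \<bar>y k\<bar> \<le> R"
  shows "integrable (lebR {..<2*n}) (\<lambda>y. indicator B y * g y)"
proof -
  have "set_integrable (lebR {..<2*n}) {x. \<forall>i<2*n. \<bar>x i\<bar> \<le> R} g"
    using assms(1) by (simp add: locally_integrable_2n_def)
  then have "set_integrable (lebR {..<2*n}) B g"
    by (rule set_integrable_subset) (use B bounded in auto)
  then show ?thesis by (simp add: set_integrable_def)
qed

section \<open>Integrals over the ordered regions\<close>

lemma borel_measurable_component_lebR: "k \<in> I \<Longrightarrow> (\<lambda>y. y k) \<in> borel_measurable (lebR I)"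
  using measurable_component_singleton[where M = "\<lambda>_. lborel"] by (simp only: measurable_lborel1)

lemma sets_ordered_between:
  assumes "N \<ge> 1" and "f ` {1..N} \<subseteq> I"
  shows "{x \<in> space (lebR I). ordered_between N a b (\<lambda>i. x (f i))} \<in> sets (lebR I)"
proof -
  have [measurable]: "(\<lambda>x. x (f i)) \<in> borel_measurable (lebR I)" if "i \<in> {1..N}" for i
    using assms(2) that by (intro borel_measurable_component_lebR) blast
  show ?thesis unfolding ordered_between_def
    by (intro sets.sets_Collect_conj sets.sets_Collect_finite_All borel_measurable_le)
      (use assms(1) in auto)
qed

lemma pairing_arg_inv_pos:
  assumes "pairing n P" and "k < 2*n"
  shows "pairing_arg_inv n P y (pairing_pos P k) = y k"
  using bij_betw_apply[OF pairing_pos_bij[OF assms(1)]] bij_betw_inv_into_left[OF pairing_pos_bij[OF assms(1)]] assms(2)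
  by (simp add: pairing_arg_inv_def)

lemma pairing_arg_inv_pairing_arg:
  assumes "pairing n P" and "tt \<in> extensional {1..2*n}"
  shows "pairing_arg_inv n P (pairing_arg n P tt) = tt"
proof
  fix i show "pairing_arg_inv n P (pairing_arg n P tt) i = tt i"
  proof (cases "i \<in> {1..2*n}")
    case True
    have h: "bij_betw (pairing_pos P) {..<2*n} {1..2*n}" by (rule pairing_pos_bij[OF assms(1)])
    then show ?thesis using True bij_betw_apply[OF bij_betw_inv_into[OF h] True] bij_betw_inv_into_right[OF h True]
      by (simp add: pairing_arg_inv_def pairing_arg_eq)
  next
    case False
    then show ?thesis using assms(2) by (auto simp: pairing_arg_inv_def extensional_def)
  qed
qed

lemma measurable_pairing_arg:
  "pairing n P \<Longrightarrow> pairing_arg n P \<in> lebR {1..2*n} \<rightarrow>\<^sub>M lebR {..<2*n}"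
  unfolding pairing_arg_eq[abs_def] using bij_betw_apply[OF pairing_pos_bij]
  by (intro measurable_restrict measurable_component_singleton) auto

lemma measurable_pairing_arg_inv:
  "pairing n P \<Longrightarrow> pairing_arg_inv n P \<in> lebR {..<2*n} \<rightarrow>\<^sub>M lebR {1..2*n}"
  unfolding pairing_arg_inv_def[abs_def] using bij_betw_apply[OF bij_betw_inv_into[OF pairing_pos_bij]]
  by (intro measurable_restrict measurable_component_singleton) auto

lemma distr_pairing_arg:
  "pairing n P \<Longrightarrow> distr (lebR {1..2*n}) (lebR {..<2*n}) (pairing_arg n P) = lebR {..<2*n}"
  using product_sigma_finite.distr_PiM_reindex_bij[OF product_sigma_finite_lborel finite_lessThan pairing_pos_bij]
  by (simp add: pairing_arg_eq[abs_def])

lemma sets_ordered_pairing_arg_inv: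
  assumes n: "n \<ge> 1" and P: "pairing n P"
  shows "{y \<in> space (lebR {..<2*n}). ordered_between (2*n) t0 t (pairing_arg_inv n P y)} \<in> sets (lebR {..<2*n})"
proof -
  have "{y \<in> space (lebR {..<2*n}). ordered_between (2*n) t0 t (pairing_arg_inv n P y)} =
      pairing_arg_inv n P -` {tt \<in> space (lebR {1..2*n}). ordered_between (2*n) t0 t tt} \<inter> space (lebR {..<2*n})"
    using measurable_space[OF measurable_pairing_arg_inv[OF P]] by auto
  also have "\<dots> \<in> sets (lebR {..<2*n})"
    using measurable_sets[OF measurable_pairing_arg_inv[OF P] sets_ordered_between[OF _ _, of "2*n" "\<lambda>i. i"]] n
    by simp
  finally show ?thesis .
qed

lemma ordered_pairing_arg_inv_bounds:
  assumes n: "n \<ge> 1" and P: "pairing n P" and ord: "ordered_between (2*n) t0 t (pairing_arg_inv n P y)"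
    and k: "k < 2*n"
  shows "t0 \<le> y k \<and> y k \<le> t"
proof -
  have "pairing_pos P k \<in> {1..2*n}" using bij_betw_apply[OF pairing_pos_bij[OF P]] k by simp
  moreover have "\<forall>i\<in>{1..2*n}. t0 \<le> pairing_arg_inv n P y i \<and> pairing_arg_inv n P y i \<le> t"
    using ord ordered_between_iff[of "2*n" t0 t] n by simp
  ultimately show ?thesis by (simp only: pairing_arg_inv_pos[OF P k, symmetric])
qed

lemma integral_pairing_arg:
  fixes g :: "(nat \<Rightarrow> real) \<Rightarrow> real"
  assumes n: "n \<ge> 1" and P: "pairing n P" and g: "g \<in> borel_measurable (lebR {..<2*n})"
  shows "(LINT tt : {tt. ordered_between (2*n) t0 t tt} | lebR {1..2*n}. g (pairing_arg n P tt)) =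
    (\<integral>y. indicator {y \<in> space (lebR {..<2*n}). ordered_between (2*n) t0 t (pairing_arg_inv n P y)} y * g y
      \<partial>lebR {..<2*n})"
proof -
  define A where "A = {y \<in> space (lebR {..<2*n}). ordered_between (2*n) t0 t (pairing_arg_inv n P y)}"
  have A_sets: "A \<in> sets (lebR {..<2*n})" unfolding A_def by (rule sets_ordered_pairing_arg_inv[OF n P])
  have "(\<integral>y. indicator A y * g y \<partial>lebR {..<2*n}) =
      (\<integral>y. indicator A y * g y \<partial>distr (lebR {1..2*n}) (lebR {..<2*n}) (pairing_arg n P))"
    by (simp only: distr_pairing_arg[OF P])
  also have "\<dots> = (\<integral>tt. indicator A (pairing_arg n P tt) * g (pairing_arg n P tt) \<partial>lebR {1..2*n})"
    by (rule integral_distr[OF measurable_pairing_arg[OF P]]) (use A_sets g in simp)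
  also have "\<dots> = (LINT tt : {tt. ordered_between (2*n) t0 t tt} | lebR {1..2*n}. g (pairing_arg n P tt))"
    unfolding set_lebesgue_integral_def
  proof (intro Bochner_Integration.integral_cong refl)
    fix tt assume tt: "tt \<in> space (lebR {1..2*n})"
    then have "pairing_arg n P tt \<in> A \<longleftrightarrow> ordered_between (2*n) t0 t tt"
      using measurable_space[OF measurable_pairing_arg[OF P] tt]
      by (simp add: A_def pairing_arg_inv_pairing_arg[OF P] space_PiM PiE_def)
    then show "indicator A (pairing_arg n P tt) * g (pairing_arg n P tt) =
        indicator {tt. ordered_between (2*n) t0 t tt} tt *\<^sub>R g (pairing_arg n P tt)"
      by (simp add: indicator_def)
  qed
  finally show ?thesis by (simp add: A_def)
qed

lemma ordered_between_cong:
  assumes "N \<ge> 1" and "\<And>i. i \<in> {1..N} \<Longrightarrow> x i = x' i"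
  shows "ordered_between N a b x \<longleftrightarrow> ordered_between N a b x'"
  using assms by (simp add: ordered_between_iff)

lemma interleaved_order_interleave_arg:
  assumes "n \<ge> 1"
  shows "interleaved_order n t0 t (interleave_arg n u u') \<longleftrightarrow>
    ordered_between n t0 t u \<and> (\<forall>m\<in>{1..n}. u m \<le> u' m \<and> u' m \<le> t)"
proof -
  have "ordered_between n t0 t (\<lambda>m. interleave_arg n u u' (2*m-2)) \<longleftrightarrow> ordered_between n t0 t u"
    by (rule ordered_between_cong[OF assms]) (rule interleave_arg_slots(1))
  moreover have "(\<forall>m\<in>{1..n}. interleave_arg n u u' (2*m-2) \<le> interleave_arg n u u' (2*m-1) \<and>
      interleave_arg n u u' (2*m-1) \<le> t) \<longleftrightarrow> (\<forall>m\<in>{1..n}. u m \<le> u' m \<and> u' m \<le> t)"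
    by (rule ball_cong[OF refl]) (simp only: interleave_arg_slots)
  ultimately show ?thesis unfolding interleaved_order_def by (simp only:)
qed

lemma sets_interleaved_order:
  assumes n: "n \<ge> 1"
  shows "{y \<in> space (lebR {..<2*n}). interleaved_order n t0 t y} \<in> sets (lebR {..<2*n})"
  unfolding interleaved_order_def
proof (intro sets.sets_Collect_conj sets_ordered_between sets.sets_Collect_finite_All)
  show "(\<lambda>m. 2*m-2) ` {1..n} \<subseteq> {..<2*n}" using even_slot by auto
  fix m assume "m \<in> {1..n}"
  then have [measurable]: "(\<lambda>y. y (2*m-2)) \<in> borel_measurable (lebR {..<2*n})"
    "(\<lambda>y. y (2*m-1)) \<in> borel_measurable (lebR {..<2*n})"
    using even_slot odd_slot by (auto intro: borel_measurable_component_lebR)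
  show "{y \<in> space (lebR {..<2*n}). y (2*m-2) \<le> y (2*m-1)} \<in> sets (lebR {..<2*n})"
    "{y \<in> space (lebR {..<2*n}). y (2*m-1) \<le> t} \<in> sets (lebR {..<2*n})"
    by measurable
qed (use n in simp_all)

lemma integral_interleave_arg:
  assumes n: "n \<ge> 1" and g: "locally_integrable_2n n g"
  shows "(LINT u : {u. ordered_between n t0 t u} | lebR {1..n}.
      (LINT u' : {u'. \<forall>m\<in>{1..n}. u m \<le> u' m \<and> u' m \<le> t} | lebR {1..n}. g (interleave_arg n u u'))) =
    (\<integral>y. indicator {y \<in> space (lebR {..<2*n}). interleaved_order n t0 t y} y * g y \<partial>lebR {..<2*n})"
proof -
  interpret product_sigma_finite "\<lambda>_. lborel :: real measure" by (rule product_sigma_finite_lborel)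
  interpret pair_sigma_finite "lebR {1..n}" "lebR {1..n}"
    by (intro pair_sigma_finite.intro sigma_finite) simp_all
  define C where "C = {y \<in> space (lebR {..<2*n}). interleaved_order n t0 t y}"
  define G where "G y = indicator C y * g y" for y
  have C_sets: "C \<in> sets (lebR {..<2*n})" unfolding C_def by (rule sets_interleaved_order[OF n])
  have G_integrable: "integrable (lebR {..<2*n}) G" unfolding G_def
    by (rule locally_integrable_2n_integrable[OF g C_sets, where R = "\<bar>t0\<bar> + \<bar>t\<bar>"])
       (use interleaved_order_bounds[OF n] in \<open>fastforce simp: C_def\<close>)
  then have G: "G \<in> borel_measurable (lebR {..<2*n})" by (rule borel_measurable_integrable)
  have "integrable (distr (lebR {1..n} \<Otimes>\<^sub>M lebR {1..n}) (lebR {..<2*n}) (\<lambda>p. interleave_arg n (fst p) (snd p))) G"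
    using G_integrable by (simp only: distr_interleave_arg[OF lborel.sigma_finite_measure_axioms])
  then have G_int: "integrable (lebR {1..n} \<Otimes>\<^sub>M lebR {1..n}) (\<lambda>p. G (interleave_arg n (fst p) (snd p)))"
    by (simp only: integrable_distr_eq[OF measurable_interleave_arg G])
  have "(LINT u : {u. ordered_between n t0 t u} | lebR {1..n}.
      (LINT u' : {u'. \<forall>m\<in>{1..n}. u m \<le> u' m \<and> u' m \<le> t} | lebR {1..n}. g (interleave_arg n u u'))) =
      (\<integral>u. (\<integral>u'. G (interleave_arg n u u') \<partial>lebR {1..n}) \<partial>lebR {1..n})"
    unfolding set_lebesgue_integral_def real_scaleR_def integral_mult_right_zero[symmetric]
  proof (intro Bochner_Integration.integral_cong refl)
    fix u u' assume "u \<in> space (lebR {1..n})" "u' \<in> space (lebR {1..n})"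
    then have "interleave_arg n u u' \<in> space (lebR {..<2*n})"
      using measurable_space[OF measurable_interleave_arg, of "(u, u')"] by (simp add: space_pair_measure)
    then show "indicator {u. ordered_between n t0 t u} u *
        (indicator {u'. \<forall>m\<in>{1..n}. u m \<le> u' m \<and> u' m \<le> t} u' * g (interleave_arg n u u')) =
        G (interleave_arg n u u')"
      by (simp add: G_def C_def interleaved_order_interleave_arg[OF n] indicator_def)
  qed
  also have "\<dots> = (\<integral>p. G (interleave_arg n (fst p) (snd p)) \<partial>(lebR {1..n} \<Otimes>\<^sub>M lebR {1..n}))"
    using integral_fst'[OF G_int] by simp
  also have "\<dots> = (\<integral>y. G y \<partial>distr (lebR {1..n} \<Otimes>\<^sub>M lebR {1..n}) (lebR {..<2*n}) (\<lambda>p. interleave_arg n (fst p) (snd p)))"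
    by (rule integral_distr[symmetric, OF measurable_interleave_arg G])
  also have "\<dots> = (\<integral>y. G y \<partial>lebR {..<2*n})"
    by (simp only: distr_interleave_arg[OF lborel.sigma_finite_measure_axioms])
  finally show ?thesis by (simp add: G_def C_def)
qed

lemma integral_sum_pairings:
  fixes g :: "(nat \<Rightarrow> real) \<Rightarrow> real"
  assumes n: "n \<ge> 1" and g: "locally_integrable_2n n g"
  shows "(\<Sum>P\<in>{P. pairing n P}. \<integral>y. indicator
      {y \<in> space (lebR {..<2*n}). ordered_between (2*n) t0 t (pairing_arg_inv n P y)} y * g y \<partial>lebR {..<2*n}) =
    (\<integral>y. indicator {y \<in> space (lebR {..<2*n}). interleaved_order n t0 t y} y * g y \<partial>lebR {..<2*n})"
proof -
  define A where "A P = {y \<in> space (lebR {..<2*n}). ordered_between (2*n) t0 t (pairing_arg_inv n P y)}" for P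
  define C where "C = {y \<in> space (lebR {..<2*n}). interleaved_order n t0 t y}"
  have A_int: "integrable (lebR {..<2*n}) (\<lambda>y. indicator (A P) y * g y)" if P: "pairing n P" for P
    unfolding A_def
    by (rule locally_integrable_2n_integrable[OF g sets_ordered_pairing_arg_inv[OF n P], where R = "\<bar>t0\<bar> + \<bar>t\<bar>"])
       (use ordered_pairing_arg_inv_bounds[OF n P] in fastforce)
  have C_int: "integrable (lebR {..<2*n}) (\<lambda>y. indicator C y * g y)"
    unfolding C_def
    by (rule locally_integrable_2n_integrable[OF g sets_interleaved_order[OF n], where R = "\<bar>t0\<bar> + \<bar>t\<bar>"])
       (use interleaved_order_bounds[OF n] in fastforce)
  have "(\<Sum>P\<in>{P. pairing n P}. \<integral>y. indicator (A P) y * g y \<partial>lebR {..<2*n}) =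
      (\<integral>y. (\<Sum>P\<in>{P. pairing n P}. indicator (A P) y * g y) \<partial>lebR {..<2*n})"
    using A_int by (intro Bochner_Integration.integral_sum[symmetric]) simp
  also have "\<dots> = (\<integral>y. indicator C y * g y \<partial>lebR {..<2*n})"
  proof (rule integral_cong_AE)
    show "(\<lambda>y. \<Sum>P\<in>{P. pairing n P}. indicator (A P) y * g y) \<in> borel_measurable (lebR {..<2*n})"
      using A_int by (intro borel_measurable_sum borel_measurable_integrable) simp
    show "(\<lambda>y. indicator C y * g y) \<in> borel_measurable (lebR {..<2*n})"
      using C_int by (rule borel_measurable_integrable)
    show "AE y in lebR {..<2*n}. (\<Sum>P\<in>{P. pairing n P}. indicator (A P) y * g y) = indicator C y * g y"
      using AE_space AE_PiM_lborel_inj_on[OF finite_lessThan[of "2*n"]]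
    proof eventually_elim
      case (elim y)
      then have "(\<Sum>P\<in>{P. pairing n P}. indicator (A P) y * g y) =
          (\<Sum>P\<in>{P. pairing n P}. if ordered_between (2*n) t0 t (pairing_arg_inv n P y) then g y else 0)"
        by (intro sum.cong) (simp_all add: A_def)
      also have "\<dots> = indicator C y * g y"
        using sum_pairings_ordering[OF n elim(2)] elim(1) by (simp add: C_def)
      finally show ?case .
    qed
  qed
  finally show ?thesis by (simp add: A_def C_def)
qed

theorem lemma4p3:
  fixes n :: nat and t0 t :: real and g :: "(nat \<Rightarrow> real) \<Rightarrow> real"
  assumes "n \<ge> 1" and "0 \<le> t0" and "t0 < t"
    and "locally_integrable_2n n g"
  shows "(\<Sum>P\<in>{P. pairing n P}.
            LINT tt : {tt. t0 \<le> tt 1 \<and> (\<forall>i\<in>{1..<2*n}. tt i \<le> tt (i+1)) \<and> tt (2*n) \<le> t}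
              | lebR {1..2*n}. g (pairing_arg n P tt))
       = (LINT u : {u. t0 \<le> u 1 \<and> (\<forall>i\<in>{1..<n}. u i \<le> u (i+1)) \<and> u n \<le> t} | lebR {1..n}.
            (LINT u' : {u'. \<forall>m\<in>{1..n}. u m \<le> u' m \<and> u' m \<le> t} | lebR {1..n}.
               g (interleave_arg n u u')))"
proof -
  note n = assms(1) and g = assms(4)
  have "(\<Sum>P\<in>{P. pairing n P}.
      LINT tt : {tt. ordered_between (2*n) t0 t tt} | lebR {1..2*n}. g (pairing_arg n P tt)) =
    (\<Sum>P\<in>{P. pairing n P}. \<integral>y. indicator
      {y \<in> space (lebR {..<2*n}). ordered_between (2*n) t0 t (pairing_arg_inv n P y)} y * g y \<partial>lebR {..<2*n})"
    using integral_pairing_arg[OF n _ locally_integrable_2n_measurable[OF g]] by simp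
  also have "\<dots> = (\<integral>y. indicator {y \<in> space (lebR {..<2*n}). interleaved_order n t0 t y} y * g y \<partial>lebR {..<2*n})"
    by (rule integral_sum_pairings[OF n g])
  also have "\<dots> = (LINT u : {u. ordered_between n t0 t u} | lebR {1..n}.
      (LINT u' : {u'. \<forall>m\<in>{1..n}. u m \<le> u' m \<and> u' m \<le> t} | lebR {1..n}. g (interleave_arg n u u')))"
    by (rule integral_interleave_arg[OF n g, symmetric])
  finally show ?thesis by (simp only: ordered_between_def)
qed

end
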